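(* Equip $\mathbb{R}^k$ with the Euclidean norm and $\mathbb{R}$ with the absolute value. Then the maps $(0,\infty)^k\to\mathbb{R}$, $\lambda\mapsto g(\|Y-X\hat\beta^\lambda\|_2^2)$ and $\lambda\mapsto\|Y-X\hat\beta^\lambda\|_2^2$ are well defined (independent of the choice of minimizer $\hat\beta^\lambda$) and continuous.
   Context: $Y\in\mathbb{R}^n$, $X\in\mathbb{R}^{n\times p}$. Link function $g:\mathbb{R}\to[0,\infty)$ with $g(0)=0$, $g$ continuous and strictly increasing on $[0,\infty)$, continuously differentiable on $(0,\infty)$ with strictly positive and non-increasing derivative, and such that $\alpha\mapsto g(\|\alpha\|_2^2)$ is strictly convex on $\mathbb{R}^n$. $M_1,\dots,M_k\in\mathbb{R}^{p\times p}$ with $\bigcap_{j}\mathrm{Ker}(M_j)=\{0\}$, $q_j\ge1$, $\|\cdot\|_{q_j}$ the $\ell_{q_j}$-norm on $\mathbb{R}^p$. For $\lambda\in(0,\infty)^k$, $\hat\beta^\lambda$ denotes any element of $\arg\min_{\beta\in\mathbb{R}^p}\{g(\|Y-X\beta\|_2^2)+\sum_{j=1}^k\lambda_j\|M_j\beta\|_{q_j}\}$. *)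

theory Defs
  imports "HOL-Analysis.Analysis"
begin

definition lq_norm :: "real \<Rightarrow> real ^ 'p \<Rightarrow> real" where
  "lq_norm q v = (\<Sum>i\<in>UNIV. \<bar>v $ i\<bar> powr q) powr (1 / q)"

definition strictly_convex_on :: "'a::real_vector set \<Rightarrow> ('a \<Rightarrow> real) \<Rightarrow> bool" where
  "strictly_convex_on S f \<longleftrightarrow> convex S \<and>
     (\<forall>x\<in>S. \<forall>y\<in>S. \<forall>t::real. x \<noteq> y \<and> 0 < t \<and> t < 1 \<longrightarrow>
        f ((1 - t) *\<^sub>R x + t *\<^sub>R y) < (1 - t) * f x + t * f y)"

definition pen_obj ::
  "(real \<Rightarrow> real) \<Rightarrow> real ^ 'n \<Rightarrow> real ^ 'p ^ 'n \<Rightarrow> ('k::finite \<Rightarrow> real ^ 'p ^ 'p)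
   \<Rightarrow> ('k \<Rightarrow> real) \<Rightarrow> real ^ 'k \<Rightarrow> real ^ 'p \<Rightarrow> real" where
  "pen_obj g Y X M q lam \<beta> =
     g ((norm (Y - X *v \<beta>))\<^sup>2) + (\<Sum>j\<in>UNIV. lam $ j * lq_norm (q j) (M j *v \<beta>))"

definition is_minimizer ::
  "(real \<Rightarrow> real) \<Rightarrow> real ^ 'n \<Rightarrow> real ^ 'p ^ 'n \<Rightarrow> ('k::finite \<Rightarrow> real ^ 'p ^ 'p)
   \<Rightarrow> ('k \<Rightarrow> real) \<Rightarrow> real ^ 'k \<Rightarrow> real ^ 'p \<Rightarrow> bool" where
  "is_minimizer g Y X M q lam \<beta> \<longleftrightarrow>
     (\<forall>\<gamma>. pen_obj g Y X M q lam \<beta> \<le> pen_obj g Y X M q lam \<gamma>)"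

end

theory Submission
  imports Defs
begin

text \<open>
  The penalty \<open>\<beta> \<mapsto> \<Sum>\<^sub>j \<lambda>\<^sub>j \<parallel>M\<^sub>j \<beta>\<parallel>\<^sub>q\<^sub>j\<close> is convex, and since the \<open>M\<^sub>j\<close> have trivial common kernel it is
  bounded below by \<open>c (min\<^sub>j \<lambda>\<^sub>j) \<parallel>\<beta>\<parallel>\<close> for some \<open>c > 0\<close>. Hence the objective is coercive and
  has a minimizer, and the minimizers for all \<open>\<lambda>\<close> with \<open>min\<^sub>j \<lambda>\<^sub>j \<ge> m > 0\<close> lie in one
  fixed ball. Strict convexity of \<open>\<alpha> \<mapsto> g(\<parallel>\<alpha>\<parallel>\<^sup>2)\<close> forces all minimizers to share the
  fitted vector \<open>X\<beta>\<close>: otherwise their midpoint would do strictly better. Finally, the objective is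
  jointly continuous in \<open>(\<lambda>, \<beta>)\<close>, so limits of minimizers are minimizers; together with the
  uniform bound this makes \<open>\<lambda> \<mapsto> X\<beta>\<^sup>\<lambda>\<close> continuous, by a subsequence argument.
\<close>

subsection \<open>The \<open>\<ell>\<^sub>q\<close> norm\<close>

lemma convex_on_powr_nonneg:
  assumes "1 \<le> q"
  shows "convex_on {0..} (\<lambda>x::real. x powr q)"
proof (rule convex_onI)
  fix t a b :: real
  assume t: "0 < t" "t < 1" and ab: "a \<in> {0..}" "b \<in> {0..}"
  have le_self: "s powr q \<le> s" if "0 \<le> s" "s \<le> 1" for s :: real
    using powr_mono'[of 1 q s] that assms by simp
  consider "a = 0" | "b = 0" | "0 < a" "0 < b"
    using ab by fastforce
  then show "((1 - t) *\<^sub>R a + t *\<^sub>R b) powr q \<le> (1 - t) * a powr q + t * b powr q"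
  proof cases
    case 1
    then show ?thesis using le_self[of t] t ab by (simp add: powr_mult mult_right_mono)
  next
    case 2
    then show ?thesis using le_self[of "1 - t"] t ab by (simp add: powr_mult mult_right_mono)
  next
    case 3
    then show ?thesis using convex_onD[OF powr_convex[OF assms], of t a b] t by simp
  qed
qed (simp add: convex_real_interval)

lemma lq_norm_nonneg: "0 \<le> lq_norm q v"
  by (simp add: lq_norm_def)

lemma lq_norm_powr:
  assumes "1 \<le> q"
  shows "lq_norm q v powr q = (\<Sum>i\<in>UNIV. \<bar>v $ i\<bar> powr q)"
  using assms by (simp add: lq_norm_def powr_powr sum_nonneg)

lemma abs_component_le_lq_norm:
  assumes "1 \<le> q"
  shows "\<bar>v $ i\<bar> \<le> lq_norm q v"
proof -
  have "\<bar>v $ i\<bar> powr q \<le> (\<Sum>i\<in>UNIV. \<bar>v $ i\<bar> powr q)"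
    by (rule member_le_sum) auto
  then have "(\<bar>v $ i\<bar> powr q) powr (1 / q) \<le> (\<Sum>i\<in>UNIV. \<bar>v $ i\<bar> powr q) powr (1 / q)"
    using assms by (intro powr_mono2) auto
  then show ?thesis
    using assms by (simp add: lq_norm_def powr_powr)
qed

lemma lq_norm_eq_0_iff:
  assumes "1 \<le> q"
  shows "lq_norm q v = 0 \<longleftrightarrow> v = 0"
proof
  assume "lq_norm q v = 0"
  then show "v = 0"
    using abs_component_le_lq_norm[OF assms, of v] by (simp add: vec_eq_iff)
qed (use assms in \<open>simp add: lq_norm_def\<close>)

lemma lq_norm_scaleR:
  assumes "1 \<le> q"
  shows "lq_norm q (c *\<^sub>R v) = \<bar>c\<bar> * lq_norm q v"
  using assms
  by (simp add: lq_norm_def abs_mult powr_mult sum_distrib_left[symmetric] powr_powr sum_nonneg)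

lemma convex_on_sum_abs_powr:
  assumes "1 \<le> q"
  shows "convex_on UNIV (\<lambda>v::real ^ 'p. \<Sum>i\<in>UNIV. \<bar>v $ i\<bar> powr q)"
proof (rule convex_onI)
  fix t :: real and u v :: "real ^ 'p"
  assume t: "0 < t" "t < 1"
  have "\<bar>((1 - t) *\<^sub>R u + t *\<^sub>R v) $ i\<bar> powr q \<le> (1 - t) * \<bar>u $ i\<bar> powr q + t * \<bar>v $ i\<bar> powr q"
    for i
  proof -
    have "\<bar>((1 - t) *\<^sub>R u + t *\<^sub>R v) $ i\<bar> \<le> (1 - t) * \<bar>u $ i\<bar> + t * \<bar>v $ i\<bar>"
      using abs_triangle_ineq[of "(1 - t) * u $ i" "t * v $ i"] t by (simp add: abs_mult)
    then have "\<bar>((1 - t) *\<^sub>R u + t *\<^sub>R v) $ i\<bar> powr q \<le> ((1 - t) * \<bar>u $ i\<bar> + t * \<bar>v $ i\<bar>) powr q"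
      using assms by (intro powr_mono2) auto
    also have "\<dots> \<le> (1 - t) * \<bar>u $ i\<bar> powr q + t * \<bar>v $ i\<bar> powr q"
      using convex_onD[OF convex_on_powr_nonneg[OF assms], of t "\<bar>u $ i\<bar>" "\<bar>v $ i\<bar>"] t by simp
    finally show ?thesis .
  qed
  then have "(\<Sum>i\<in>UNIV. \<bar>((1 - t) *\<^sub>R u + t *\<^sub>R v) $ i\<bar> powr q)
      \<le> (\<Sum>i\<in>UNIV. (1 - t) * \<bar>u $ i\<bar> powr q + t * \<bar>v $ i\<bar> powr q)"
    by (rule sum_mono)
  then show "(\<Sum>i\<in>UNIV. \<bar>((1 - t) *\<^sub>R u + t *\<^sub>R v) $ i\<bar> powr q)
      \<le> (1 - t) * (\<Sum>i\<in>UNIV. \<bar>u $ i\<bar> powr q) + t * (\<Sum>i\<in>UNIV. \<bar>v $ i\<bar> powr q)"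
    by (simp add: sum.distrib sum_distrib_left)
qed simp

lemma lq_norm_triangle:
  assumes q: "1 \<le> q"
  shows "lq_norm q (u + v) \<le> lq_norm q u + lq_norm q v"
proof (cases "u = 0 \<or> v = 0")
  case True
  then show ?thesis by (auto simp: lq_norm_nonneg)
next
  case False
  define a where "a = lq_norm q u"
  define b where "b = lq_norm q v"
  have a: "0 < a" and b: "0 < b"
    using False lq_norm_eq_0_iff[OF q] lq_norm_nonneg unfolding a_def b_def by (metis order_le_less)+
  define t where "t = b / (a + b)"
  have t: "0 \<le> t" "t \<le> 1"
    using a b by (auto simp: t_def)
  \<comment> \<open>\<open>(u+v)/(a+b)\<close> is a convex combination of the unit vectors \<open>u/a\<close> and \<open>v/b\<close>.\<close>
  have comb: "(1 / (a + b)) *\<^sub>R (u + v) = (1 - t) *\<^sub>R ((1 / a) *\<^sub>R u) + t *\<^sub>R ((1 / b) *\<^sub>R v)"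
    using a b by (simp add: t_def field_simps scaleR_add_right)
  have unit: "lq_norm q ((1 / a) *\<^sub>R u) = 1" "lq_norm q ((1 / b) *\<^sub>R v) = 1"
    using a b by (simp_all add: lq_norm_scaleR[OF q] a_def b_def)
  have "lq_norm q ((1 / (a + b)) *\<^sub>R (u + v)) powr q \<le> 1"
    using convex_onD[OF convex_on_sum_abs_powr[OF q], of t "(1 / a) *\<^sub>R u" "(1 / b) *\<^sub>R v"] t
      lq_norm_powr[OF q, of "(1 / a) *\<^sub>R u"] lq_norm_powr[OF q, of "(1 / b) *\<^sub>R v"]
    by (simp add: lq_norm_powr[OF q] comb unit)
  then have "lq_norm q ((1 / (a + b)) *\<^sub>R (u + v)) \<le> 1"
    using powr_mono[of 1 q "lq_norm q ((1 / (a + b)) *\<^sub>R (u + v))"] q lq_norm_nonneg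
    by (cases "lq_norm q ((1 / (a + b)) *\<^sub>R (u + v)) \<le> 1") auto
  then have "(1 / (a + b)) * lq_norm q (u + v) \<le> 1"
    using a b by (simp only: lq_norm_scaleR[OF q]) simp
  then show ?thesis
    using a b by (simp add: a_def b_def field_simps)
qed

lemma continuous_on_lq_norm: "1 \<le> q \<Longrightarrow> continuous_on UNIV (lq_norm q)"
  unfolding lq_norm_def by (intro continuous_on_powr' continuous_intros) (auto simp: sum_nonneg)

lemma continuous_attains_global_inf:
  fixes f :: "'a::euclidean_space \<Rightarrow> real"
  assumes "continuous_on UNIV f" and "0 \<le> R" and "\<And>x. R < norm x \<Longrightarrow> f 0 \<le> f x"
  shows "\<exists>b. \<forall>y. f b \<le> f y"
proof -
  have "continuous_on (cball 0 R) f"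
    using assms(1) by (rule continuous_on_subset) simp
  moreover have "cball 0 R \<noteq> {}"
    using assms(2) by simp
  ultimately obtain b where b: "b \<in> cball 0 R" "\<And>y. y \<in> cball 0 R \<Longrightarrow> f b \<le> f y"
    using continuous_attains_inf[OF compact_cball] by metis
  have "f b \<le> f y" for y
  proof (cases "y \<in> cball 0 R")
    case False
    then have "f b \<le> f 0" "f 0 \<le> f y"
      using b(2)[of 0] assms(2) assms(3)[of y] by auto
    then show ?thesis by simp
  qed (rule b(2))
  then show ?thesis by blast
qed

lemma LIMSEQ_if_subseq_subseq:
  fixes x :: "nat \<Rightarrow> 'a::topological_space"
  assumes "\<And>r::nat \<Rightarrow> nat. strict_mono r \<Longrightarrow> \<exists>s::nat \<Rightarrow> nat. strict_mono s \<and> (x \<circ> r \<circ> s) \<longlonglongrightarrow> l"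
  shows "x \<longlonglongrightarrow> l"
proof (rule ccontr)
  assume "\<not> x \<longlonglongrightarrow> l"
  then obtain U where U: "open U" "l \<in> U" and "\<not> eventually (\<lambda>n. x n \<in> U) sequentially"
    unfolding tendsto_def by blast
  then have "infinite {n. x n \<notin> U}"
    by (simp add: not_eventually INFM_iff_infinite cofinite_eq_sequentially[symmetric])
  then obtain r :: "nat \<Rightarrow> nat" where r: "strict_mono r" "\<And>n. x (r n) \<notin> U"
    using infinite_enumerate by blast
  then obtain s where "(x \<circ> r \<circ> s) \<longlonglongrightarrow> l"
    using assms[OF r(1)] by blast
  then have "eventually (\<lambda>n. x (r (s n)) \<in> U) sequentially"
    using U by (auto dest: topological_tendstoD)
  then show False
    using r(2) by (auto simp: eventually_sequentially)
qed

subsection \<open>The penalized least squares problem\<close>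

locale penalized_regression =
  fixes Y :: "real ^ 'n" and X :: "real ^ 'p ^ 'n" and M :: "'k::finite \<Rightarrow> real ^ 'p ^ 'p"
    and q :: "'k \<Rightarrow> real" and g :: "real \<Rightarrow> real"
  assumes g_nonneg: "\<And>x. 0 \<le> g x"
    and g_cont: "continuous_on {0..} g"
    and g_strict_convex: "strictly_convex_on UNIV (\<lambda>\<alpha>::real ^ 'n. g ((norm \<alpha>)\<^sup>2))"
    and ker: "\<And>\<beta>. (\<And>j. M j *v \<beta> = 0) \<Longrightarrow> \<beta> = 0"
    and q_ge1: "\<And>j. 1 \<le> q j"
begin

definition penalty :: "real ^ 'p \<Rightarrow> real" where
  "penalty \<beta> = (\<Sum>j\<in>UNIV. lq_norm (q j) (M j *v \<beta>))"

lemma penalty_nonneg: "0 \<le> penalty \<beta>"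
  unfolding penalty_def by (simp add: sum_nonneg lq_norm_nonneg)

lemma penalty_scaleR: "penalty (c *\<^sub>R \<beta>) = \<bar>c\<bar> * penalty \<beta>"
  unfolding penalty_def by (simp add: matrix_vector_mult_scaleR lq_norm_scaleR q_ge1 sum_distrib_left)

lemma continuous_on_penalty: "continuous_on UNIV penalty"
  unfolding penalty_def
  by (intro continuous_on_sum continuous_on_compose2[OF continuous_on_lq_norm[OF q_ge1]]
      linear_continuous_on matrix_vector_mul_bounded_linear) auto

lemma penalty_pos:
  assumes "\<beta> \<noteq> 0"
  shows "0 < penalty \<beta>"
proof -
  obtain j where j: "M j *v \<beta> \<noteq> 0"
    using ker assms by blast
  then have "0 < lq_norm (q j) (M j *v \<beta>)"
    using lq_norm_eq_0_iff[OF q_ge1] lq_norm_nonneg by (metis order_le_less)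
  also have "\<dots> \<le> penalty \<beta>"
    unfolding penalty_def by (rule member_le_sum) (auto simp: lq_norm_nonneg)
  finally show ?thesis .
qed

lemma penalty_coercive:
  obtains c where "0 < c" "\<And>\<beta>. c * norm \<beta> \<le> penalty \<beta>"
proof -
  have "continuous_on (sphere 0 1) penalty"
    using continuous_on_penalty by (rule continuous_on_subset) simp
  moreover have "sphere (0::real ^ 'p) 1 \<noteq> {}"
    by simp
  ultimately obtain u0 where u0: "u0 \<in> sphere 0 1" "\<And>u. u \<in> sphere 0 1 \<Longrightarrow> penalty u0 \<le> penalty u"
    using continuous_attains_inf[OF compact_sphere] by metis
  have "penalty u0 * norm \<beta> \<le> penalty \<beta>" for \<beta>
  proof (cases "\<beta> = 0")
    case False
    have "penalty u0 * norm \<beta> \<le> penalty ((1 / norm \<beta>) *\<^sub>R \<beta>) * norm \<beta>"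
      using u0(2)[of "(1 / norm \<beta>) *\<^sub>R \<beta>"] False by (simp add: mult_right_mono)
    also have "\<dots> = penalty \<beta>"
      using False by (simp add: penalty_scaleR)
    finally show ?thesis .
  qed (simp add: penalty_nonneg)
  moreover have "0 < penalty u0"
    using u0(1) by (intro penalty_pos) auto
  ultimately show ?thesis
    using that by blast
qed

abbreviation objective :: "real ^ 'k \<Rightarrow> real ^ 'p \<Rightarrow> real" where
  "objective \<equiv> pen_obj g Y X M q"

abbreviation minimizer :: "real ^ 'k \<Rightarrow> real ^ 'p \<Rightarrow> bool" where
  "minimizer \<equiv> is_minimizer g Y X M q"

lemma objective_ge_penalty:
  assumes "0 \<le> m" and "\<And>j. m \<le> lam $ j"
  shows "m * penalty \<beta> \<le> objective lam \<beta>"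
proof -
  have "m * penalty \<beta> = (\<Sum>j\<in>UNIV. m * lq_norm (q j) (M j *v \<beta>))"
    by (simp add: penalty_def sum_distrib_left)
  also have "\<dots> \<le> (\<Sum>j\<in>UNIV. lam $ j * lq_norm (q j) (M j *v \<beta>))"
    by (intro sum_mono mult_right_mono) (auto simp: assms lq_norm_nonneg)
  also have "\<dots> \<le> objective lam \<beta>"
    unfolding pen_obj_def using g_nonneg by simp
  finally show ?thesis .
qed

lemma objective_zero: "objective lam 0 = g ((norm Y)\<^sup>2)"
  unfolding pen_obj_def by (simp add: lq_norm_def q_ge1)

lemma tendsto_objective:
  assumes "(lam \<longlongrightarrow> lam0) F" and "(\<beta> \<longlongrightarrow> \<beta>0) F"
  shows "((\<lambda>x. objective (lam x) (\<beta> x)) \<longlongrightarrow> objective lam0 \<beta>0) F"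
  unfolding pen_obj_def
proof (intro tendsto_add tendsto_sum tendsto_mult)
  have "((\<lambda>x. (norm (Y - X *v \<beta> x))\<^sup>2) \<longlongrightarrow> (norm (Y - X *v \<beta>0))\<^sup>2) F"
    by (intro tendsto_intros bounded_linear.tendsto[OF matrix_vector_mul_bounded_linear] assms)
  then show "((\<lambda>x. g ((norm (Y - X *v \<beta> x))\<^sup>2)) \<longlongrightarrow> g ((norm (Y - X *v \<beta>0))\<^sup>2)) F"
    by (rule continuous_on_tendsto_compose[OF g_cont]) auto
  fix j
  show "((\<lambda>x. lam x $ j) \<longlongrightarrow> lam0 $ j) F"
    by (intro tendsto_intros assms)
  have "((\<lambda>x. M j *v \<beta> x) \<longlongrightarrow> M j *v \<beta>0) F"
    by (intro bounded_linear.tendsto[OF matrix_vector_mul_bounded_linear] assms)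
  then show "((\<lambda>x. lq_norm (q j) (M j *v \<beta> x)) \<longlongrightarrow> lq_norm (q j) (M j *v \<beta>0)) F"
    by (rule continuous_on_tendsto_compose[OF continuous_on_lq_norm[OF q_ge1]]) auto
qed

lemma minimizer_exists:
  assumes "\<And>j. 0 < lam $ j"
  shows "\<exists>\<beta>. minimizer lam \<beta>"
proof -
  obtain c where c: "0 < c" "\<And>\<beta>. c * norm \<beta> \<le> penalty \<beta>"
    using penalty_coercive by blast
  define m where "m = Min (range (\<lambda>j. lam $ j))"
  have m: "0 < m" "\<And>j. m \<le> lam $ j"
    using assms by (auto simp: m_def)
  define R where "R = g ((norm Y)\<^sup>2) / (m * c)"
  have "objective lam 0 \<le> objective lam \<beta>" if "R < norm \<beta>" for \<beta>
  proof -
    have "objective lam 0 = m * c * R"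
      using m c by (simp add: objective_zero R_def)
    also have "\<dots> \<le> m * (c * norm \<beta>)"
      using that m c by simp
    also have "\<dots> \<le> m * penalty \<beta>"
      using m c by (intro mult_left_mono) auto
    also have "\<dots> \<le> objective lam \<beta>"
      using m by (intro objective_ge_penalty) auto
    finally show ?thesis .
  qed
  moreover have "continuous_on UNIV (objective lam)"
    unfolding continuous_on_def by (intro ballI tendsto_objective tendsto_const tendsto_ident_at)
  moreover have "0 \<le> R"
    using g_nonneg m c by (simp add: R_def)
  ultimately show ?thesis
    unfolding is_minimizer_def using continuous_attains_global_inf by blast
qed

lemma minimizer_norm_bounded:
  assumes "0 < m"
  obtains R where "\<And>lam \<beta>. (\<And>j. m \<le> lam $ j) \<Longrightarrow> minimizer lam \<beta> \<Longrightarrow> norm \<beta> \<le> R"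
proof -
  obtain c where c: "0 < c" "\<And>\<beta>. c * norm \<beta> \<le> penalty \<beta>"
    using penalty_coercive by blast
  have "norm \<beta> \<le> g ((norm Y)\<^sup>2) / (m * c)"
    if lam: "\<And>j. m \<le> lam $ j" and min: "minimizer lam \<beta>" for lam \<beta>
  proof -
    have "m * (c * norm \<beta>) \<le> m * penalty \<beta>"
      using assms c by (intro mult_left_mono) auto
    also have "\<dots> \<le> objective lam \<beta>"
      using assms lam by (intro objective_ge_penalty) auto
    also have "\<dots> \<le> objective lam 0"
      using min by (simp add: is_minimizer_def)
    finally show ?thesis
      using assms c by (simp add: objective_zero field_simps)
  qed
  then show ?thesis
    using that by blast
qed

lemma minimizer_limit:
  assumes "lam \<longlonglongrightarrow> lam0" and "\<beta> \<longlonglongrightarrow> \<beta>0" and "\<And>n. minimizer (lam n) (\<beta> n)"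
  shows "minimizer lam0 \<beta>0"
  unfolding is_minimizer_def
proof
  fix \<gamma>
  show "objective lam0 \<beta>0 \<le> objective lam0 \<gamma>"
    using assms(3)
    by (intro LIMSEQ_le[OF tendsto_objective[OF assms(1,2)] tendsto_objective[OF assms(1) tendsto_const]])
      (simp add: is_minimizer_def)
qed

lemma objective_midpoint_less:
  assumes lam: "\<And>j. 0 \<le> lam $ j" and fits: "X *v \<beta>1 \<noteq> X *v \<beta>2"
  shows "objective lam (midpoint \<beta>1 \<beta>2) < (objective lam \<beta>1 + objective lam \<beta>2) / 2"
proof -
  define r1 r2 where "r1 = Y - X *v \<beta>1" and "r2 = Y - X *v \<beta>2"
  have "Y - X *v midpoint \<beta>1 \<beta>2 = (1 - 1/2) *\<^sub>R r1 + (1/2) *\<^sub>R r2"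
    by (simp add: r1_def r2_def midpoint_def matrix_vector_mult_scaleR vec_eq_iff algebra_simps)
  moreover have "r1 \<noteq> r2"
    using fits by (simp add: r1_def r2_def)
  moreover have "g ((norm ((1 - 1/2) *\<^sub>R r1 + (1/2) *\<^sub>R r2))\<^sup>2)
      < (1 - 1/2) * g ((norm r1)\<^sup>2) + (1/2) * g ((norm r2)\<^sup>2)"
    using g_strict_convex[unfolded strictly_convex_on_def, THEN conjunct2, rule_format, of r1 r2 "1/2"]
      \<open>r1 \<noteq> r2\<close> by simp
  ultimately have loss: "g ((norm (Y - X *v midpoint \<beta>1 \<beta>2))\<^sup>2) < (g ((norm r1)\<^sup>2) + g ((norm r2)\<^sup>2)) / 2"
    by simp
  have "lq_norm (q j) (M j *v midpoint \<beta>1 \<beta>2)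
      \<le> (lq_norm (q j) (M j *v \<beta>1) + lq_norm (q j) (M j *v \<beta>2)) / 2" for j
    using lq_norm_triangle[OF q_ge1, of j "M j *v \<beta>1" "M j *v \<beta>2"]
    by (simp add: midpoint_def matrix_vector_mult_scaleR matrix_vector_right_distrib
        lq_norm_scaleR[OF q_ge1])
  then have "(\<Sum>j\<in>UNIV. lam $ j * lq_norm (q j) (M j *v midpoint \<beta>1 \<beta>2))
      \<le> (\<Sum>j\<in>UNIV. lam $ j * ((lq_norm (q j) (M j *v \<beta>1) + lq_norm (q j) (M j *v \<beta>2)) / 2))"
    by (intro sum_mono mult_left_mono lam)
  with loss show ?thesis
    unfolding pen_obj_def r1_def r2_def
    by (simp add: sum.distrib sum_distrib_left sum_divide_distrib algebra_simps add_divide_distrib)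
qed

text \<open>The loss is strictly convex only as a function of \<open>X\<beta>\<close>, so minimizers need not be unique,
  but their fitted vectors are.\<close>

lemma minimizer_fit_unique:
  assumes "\<And>j. 0 \<le> lam $ j" and "minimizer lam \<beta>1" and "minimizer lam \<beta>2"
  shows "X *v \<beta>1 = X *v \<beta>2"
proof (rule ccontr)
  assume "X *v \<beta>1 \<noteq> X *v \<beta>2"
  then have mid: "objective lam (midpoint \<beta>1 \<beta>2) < (objective lam \<beta>1 + objective lam \<beta>2) / 2"
    by (rule objective_midpoint_less[OF assms(1)])
  have le: "objective lam \<beta>1 \<le> objective lam (midpoint \<beta>1 \<beta>2)"
    "objective lam \<beta>2 \<le> objective lam (midpoint \<beta>1 \<beta>2)"
    using assms(2,3) unfolding is_minimizer_def by blast+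
  with mid show False
    by argo
qed

definition fitted :: "real ^ 'k \<Rightarrow> real ^ 'n" where
  "fitted lam = X *v (SOME \<beta>. minimizer lam \<beta>)"

lemma fitted_eq:
  assumes "\<And>j. 0 < lam $ j" and "minimizer lam \<beta>"
  shows "fitted lam = X *v \<beta>"
  unfolding fitted_def
  by (rule minimizer_fit_unique[OF _ someI_ex[OF minimizer_exists[OF assms(1)]] assms(2)])
    (simp add: assms(1) less_imp_le)

lemma continuous_on_fitted: "continuous_on {lam. \<forall>j. 0 < lam $ j} fitted"
proof (rule continuous_on_sequentiallyI)
  fix u :: "nat \<Rightarrow> real ^ 'k" and a
  assume u: "\<forall>n. u n \<in> {lam. \<forall>j. 0 < lam $ j}" and a: "a \<in> {lam. \<forall>j. 0 < lam $ j}"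
    and lim: "u \<longlonglongrightarrow> a"
  define m where "m = Min (range (\<lambda>j. a $ j)) / 2"
  have Min_a: "0 < Min (range (\<lambda>j. a $ j))" "\<And>j. Min (range (\<lambda>j. a $ j)) \<le> a $ j"
    using a by auto
  have m: "0 < m" "\<And>j. m < a $ j"
  proof -
    show "0 < m"
      unfolding m_def using Min_a(1) by linarith
    show "m < a $ j" for j
      unfolding m_def using Min_a(1) Min_a(2)[of j] by linarith
  qed
  have "eventually (\<lambda>n. \<forall>j. m < u n $ j) sequentially"
    by (intro eventually_all_finite allI order_tendstoD(1)[OF tendsto_vec_nth[OF lim] m(2)])
  then obtain N where N: "\<And>n j. N \<le> n \<Longrightarrow> m < u n $ j"
    unfolding eventually_sequentially by blast
  obtain R where R: "\<And>lam \<beta>. (\<And>j. m \<le> lam $ j) \<Longrightarrow> minimizer lam \<beta> \<Longrightarrow> norm \<beta> \<le> R"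
    by (rule minimizer_norm_bounded[OF m(1)]) blast
  show "(\<lambda>n. fitted (u n)) \<longlonglongrightarrow> fitted a"
  proof (rule LIMSEQ_if_subseq_subseq)
    fix r :: "nat \<Rightarrow> nat"
    assume r: "strict_mono r"
    \<comment> \<open>Shifting by \<open>N\<close> keeps all parameters in the region where the minimizers are bounded.\<close>
    define \<beta> where "\<beta> n = (SOME \<beta>. minimizer (u (r (n + N))) \<beta>)" for n
    have min: "minimizer (u (r (n + N))) (\<beta> n)" for n
      unfolding \<beta>_def using u by (intro someI_ex[of "minimizer _"] minimizer_exists) auto
    have "norm (\<beta> n) \<le> R" for n
    proof (rule R[OF less_imp_le[OF N] min])
      show "N \<le> r (n + N)"
        using seq_suble[OF r, of "n + N"] by linarith
    qed
    then have "\<forall>n. \<beta> n \<in> cball 0 R"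
      by simp
    then obtain l s where s: "strict_mono s" "(\<beta> \<circ> s) \<longlonglongrightarrow> l"
      using seq_compactE[OF compact_imp_seq_compact[OF compact_cball]] by blast
    define t where "t n = s n + N" for n
    have t: "strict_mono t"
      using s(1) by (simp add: t_def strict_mono_def)
    have "(u \<circ> r \<circ> t) \<longlonglongrightarrow> a"
      using LIMSEQ_subseq_LIMSEQ[OF lim strict_mono_o[OF r t]] by (simp add: o_assoc)
    then have "minimizer a l"
      by (rule minimizer_limit[OF _ s(2)]) (simp add: min t_def)
    then have "fitted a = X *v l"
      using a fitted_eq by blast
    moreover have "fitted (u (r (t n))) = X *v (\<beta> \<circ> s) n" for n
      using u fitted_eq[OF _ min[of "s n"]] by (simp add: t_def)
    moreover have "(\<lambda>n. X *v (\<beta> \<circ> s) n) \<longlonglongrightarrow> X *v l"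
      by (intro bounded_linear.tendsto[OF matrix_vector_mul_bounded_linear] s(2))
    ultimately have "((\<lambda>n. fitted (u n)) \<circ> r \<circ> t) \<longlonglongrightarrow> fitted a"
      by (simp add: o_def)
    then show "\<exists>t. strict_mono t \<and> ((\<lambda>n. fitted (u n)) \<circ> r \<circ> t) \<longlonglongrightarrow> fitted a"
      using t by blast
  qed
qed

end

lemma lemma3:
  fixes Y :: "real ^ 'n" and X :: "real ^ 'p ^ 'n"
    and M :: "'k::finite \<Rightarrow> real ^ 'p ^ 'p" and q :: "'k \<Rightarrow> real"
    and g g' :: "real \<Rightarrow> real"
  assumes g_nonneg: "\<forall>x. 0 \<le> g x"
    and g0: "g 0 = 0"
    and g_cont: "continuous_on {0..} g"
    and g_incr: "strict_mono_on {0..} g"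
    and g_deriv: "\<forall>x>0. (g has_real_derivative g' x) (at x)"
    and g'_cont: "continuous_on {0<..} g'"
    and g'_pos: "\<forall>x>0. 0 < g' x"
    and g'_nonincr: "\<forall>x y. 0 < x \<and> x \<le> y \<longrightarrow> g' y \<le> g' x"
    and g_strict_convex: "strictly_convex_on UNIV (\<lambda>\<alpha>::real ^ 'n. g ((norm \<alpha>)\<^sup>2))"
    and ker: "\<forall>\<beta>. (\<forall>j. M j *v \<beta> = 0) \<longrightarrow> \<beta> = 0"
    and q_ge1: "\<forall>j. 1 \<le> q j"
  shows "(\<forall>lam::real ^ 'k. (\<forall>j. 0 < lam $ j) \<longrightarrow> (\<exists>\<beta>. is_minimizer g Y X M q lam \<beta>)) \<and>
         (\<exists>F G :: real ^ 'k \<Rightarrow> real.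
            (\<forall>lam. (\<forall>j. 0 < lam $ j) \<longrightarrow>
               (\<forall>\<beta>. is_minimizer g Y X M q lam \<beta> \<longrightarrow>
                    G lam = g ((norm (Y - X *v \<beta>))\<^sup>2) \<and> F lam = (norm (Y - X *v \<beta>))\<^sup>2)) \<and>
            continuous_on {lam. \<forall>j. 0 < lam $ j} G \<and>
            continuous_on {lam. \<forall>j. 0 < lam $ j} F)"
proof -
  interpret penalized_regression Y X M q g
    using g_nonneg g_cont g_strict_convex ker q_ge1 by unfold_locales auto
  define F where "F lam = (norm (Y - fitted lam))\<^sup>2" for lam
  have "continuous_on {lam. \<forall>j. 0 < lam $ j} F"
    unfolding F_def by (intro continuous_intros continuous_on_fitted)
  moreover have "continuous_on {lam. \<forall>j. 0 < lam $ j} (\<lambda>lam. g (F lam))"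
    using calculation by (rule continuous_on_compose2[OF g_cont]) (auto simp: F_def)
  moreover have "F lam = (norm (Y - X *v \<beta>))\<^sup>2"
    if "\<forall>j. 0 < lam $ j" and "is_minimizer g Y X M q lam \<beta>" for lam \<beta>
    using that fitted_eq by (simp add: F_def)
  ultimately show ?thesis
    using minimizer_exists by (intro conjI exI[of _ F] exI[of _ "\<lambda>lam. g (F lam)"]) auto
qed

end
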